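(* Let $\epsilon\in(0,\epsilon_0)$ and let $\gamma$ be a unit-speed minimizer of $F$ in $\tilde Y_\epsilon$, parametrized as $\gamma=\{(1-\alpha(\theta)^2)^{1/2}(\cos\theta\,e_1+\sin\theta\,e_2)+\alpha(\theta)e_3:\theta\in\mathbb{S}^1\}$ and oriented so that $\theta$ increases. If $I$ is a (maximal open) interval of $\{\theta\in\mathbb{S}^1:\alpha(\theta)>\epsilon\}$ with $\mathcal{H}^1(I)<\pi$, then $\kappa\le\epsilon(1-\epsilon^2)^{-1/2}$ at some point of $\gamma$ whose $\theta$-coordinate lies in $I$.
   Context: $\mathbb{S}^1=\mathbb{R}/2\pi\mathbb{Z}$, $\mathbb{S}^2\subset\mathbb{R}^3$ the unit sphere, $e_1,e_2,e_3$ the standard basis; $\theta$ is the angular coordinate in cylindrical coordinates about the $e_3$ axis. For $\epsilon>0$, $\tilde Y_\epsilon:=\{\gamma\in W^{2,2}(\mathbb{S}^1;\mathbb{S}^2): \mathrm{Length}(\gamma)=2\pi,\ \gamma(\mathbb{S}^1)\subset\{x_3\ge\epsilon\}\}$. For a regular curve $\gamma$ on $\mathbb{S}^2$ the geodesic curvature is $\kappa=\frac{\gamma''\cdot(\gamma\times\gamma')}{|\gamma'|^3}$, and $F(\gamma):=\int\kappa^2\,ds_\gamma$. $\epsilon_0>0$ is a universal constant small enough that (as established in the paper) every unit-speed minimizer of $F$ in $\tilde Y_\epsilon$, $\epsilon<\epsilon_0$, admits such a parametrization with $\|\alpha\|_{C^{2,1}(\mathbb{S}^1)}\le C\epsilon$.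 $\mathcal{H}^1(I)$ is the length of $I$ in the $\theta$ variable. *)

theory Defs
  imports "HOL-Analysis.Analysis"
begin

text \<open>Curves on the unit sphere parametrized over S^1 = R / 2 pi Z are represented as
  2 pi-periodic functions real => real^3.\<close>

text \<open>W^{2,2}(S^1; R^3): 2pi-periodic, gamma is an indefinite integral of g, g an indefinite
  integral of h, and h square integrable over one period.\<close>
definition W22_loop :: "(real \<Rightarrow> real^3) \<Rightarrow> bool" where
  "W22_loop \<gamma> \<longleftrightarrow> (\<forall>t. \<gamma> (t + 2*pi) = \<gamma> t) \<and>
     (\<exists>g h. (\<forall>a b. a \<le> b \<longrightarrow>
                 (g has_integral (\<gamma> b - \<gamma> a)) {a..b} \<and> (h has_integral (g b - g a)) {a..b}) \<and>
            (\<lambda>t. norm (h t)^2) integrable_on {0..2*pi})"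

abbreviation vd :: "(real \<Rightarrow> real^3) \<Rightarrow> real \<Rightarrow> real^3" where
  "vd \<gamma> t \<equiv> vector_derivative \<gamma> (at t)"

definition kappa :: "(real \<Rightarrow> real^3) \<Rightarrow> real \<Rightarrow> real" where
  "kappa \<gamma> t = (vd (vd \<gamma>) t \<bullet> cross3 (\<gamma> t) (vd \<gamma> t)) / norm (vd \<gamma> t) ^ 3"

definition F :: "(real \<Rightarrow> real^3) \<Rightarrow> real" where
  "F \<gamma> = integral {0..2*pi} (\<lambda>t. (kappa \<gamma> t)^2 * norm (vd \<gamma> t))"

definition curve_length :: "(real \<Rightarrow> real^3) \<Rightarrow> real" where
  "curve_length \<gamma> = integral {0..2*pi} (\<lambda>t. norm (vd \<gamma> t))"

text \<open>tilde Y_epsilon (restricted to regular curves, on which F is defined)\<close>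
definition Ytilde :: "real \<Rightarrow> (real \<Rightarrow> real^3) set" where
  "Ytilde \<epsilon> = {\<gamma>. W22_loop \<gamma> \<and> (\<forall>t. norm (\<gamma> t) = 1) \<and> (\<forall>t. vd \<gamma> t \<noteq> 0) \<and>
                    curve_length \<gamma> = 2*pi \<and> (\<forall>t. \<gamma> t $ 3 \<ge> \<epsilon>)}"

definition circ_param :: "(real \<Rightarrow> real) \<Rightarrow> real \<Rightarrow> real^3" where
  "circ_param \<alpha> \<theta> = vector [sqrt (1 - (\<alpha> \<theta>)^2) * cos \<theta>, sqrt (1 - (\<alpha> \<theta>)^2) * sin \<theta>, \<alpha> \<theta>]"

end

theory Submission
  imports Defs
begin

(* Write the unit-speed curve as gamma' = g and g' = h; by Lebesgue differentiation of
   Henstock-Kurzweil primitives the second equation holds almost everywhere, and in the moving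
   frame (gamma, g, n = gamma x g) it reads h = - gamma + kappa n.

   Tilt the cap {x. x $ 3 >= eps} about a horizontal axis, away from the meridian through the
   midpoint of I, until its boundary circle first touches the arc of gamma over I.  Since the
   arc starts and ends on the circle x $ 3 = eps and I is shorter than pi, the first contact
   happens at an interior parameter s0.  For the unit axis c of that cap the functions
   u = gamma . c, v = g . c and w = n . c satisfy u' = v, v' = - u + kappa w, u^2 + v^2 + w^2 = 1,
   and u <= eps, u s0 = eps, v s0 = 0; moreover w s0 > 0 because theta increases along gamma.
   If kappa exceeded eps / sqrt (1 - eps^2), the geodesic curvature of the boundary circle,
   almost everywhere after s0, then v' >= - C v^2 would keep v >= 0, so u would stay equal to
   eps: the curve would run along the circle and have exactly its curvature there. *)

section \<open>Primitives\<close>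

lemma primitive_continuous:
  fixes F f :: "real \<Rightarrow> 'a::euclidean_space"
  assumes H: "\<And>a b. a \<le> b \<Longrightarrow> (f has_integral (F b - F a)) {a..b}"
  shows "continuous_on UNIV F"
proof -
  have "isCont F x" for x
  proof -
    have "f integrable_on {x-1..x+1}" using H[of "x-1" "x+1"] by (auto simp: integrable_on_def)
    then have "continuous_on {x-1..x+1} (\<lambda>y. F (x-1) + integral {x-1..y} f)"
      by (intro continuous_intros indefinite_integral_continuous_1)
    moreover have "F (x-1) + integral {x-1..y} f = F y" if "y \<in> {x-1..x+1}" for y
      using H[of "x-1" y] that by (simp add: integral_unique)
    ultimately have "continuous_on {x-1..x+1} F" by (rule continuous_on_eq)
    then show ?thesis by (rule continuous_on_interior) auto
  qed
  then show ?thesis by (simp add: continuous_at_imp_continuous_on)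
qed

lemma primitive_has_vector_derivative:
  fixes F f :: "real \<Rightarrow> 'a::euclidean_space"
  assumes H: "\<And>a b. a \<le> b \<Longrightarrow> (f has_integral (F b - F a)) {a..b}" and "continuous_on UNIV f"
  shows "(F has_vector_derivative f x) (at x)"
proof -
  have "((\<lambda>u. integral {x-1..u} f) has_vector_derivative f x) (at x within {x-1..x+1})"
    by (rule integral_has_vector_derivative) (use assms(2) continuous_on_subset in auto)
  then have "((\<lambda>u. F (x-1) + integral {x-1..u} f) has_vector_derivative f x) (at x within {x-1..x+1})"
    by (intro derivative_eq_intros) auto
  then have "(F has_vector_derivative f x) (at x within {x-1..x+1})"
  proof (rule has_vector_derivative_transform_within[where d = 1])
    fix y assume "y \<in> {x-1..x+1}"
    then show "F (x-1) + integral {x-1..y} f = F y" using H[of "x-1" y] by (simp add: integral_unique)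
  qed auto
  then show ?thesis by (simp add: at_within_Icc_at)
qed

lemma has_integral_le_off_negligible:
  fixes f g :: "'n::euclidean_space \<Rightarrow> real"
  assumes "(f has_integral i) S" "(g has_integral j) S" "negligible N"
    and le: "\<And>x. x \<in> S \<Longrightarrow> x \<notin> N \<Longrightarrow> f x \<le> g x"
  shows "i \<le> j"
proof -
  have "((\<lambda>x. if x \<in> N then f x else g x) has_integral j) S"
    by (rule has_integral_spike[OF \<open>negligible N\<close> _ assms(2)]) simp
  then show ?thesis
    by (rule has_integral_le[OF assms(1)]) (use le in auto)
qed

section \<open>Lebesgue differentiation of indefinite integrals\<close>

lemma norm_content_segment_minus_integral:
  fixes g h :: "real \<Rightarrow> 'a::euclidean_space"
  assumes H: "\<And>a b. a \<le> b \<Longrightarrow> (h has_integral (g b - g a)) {a..b}"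
  shows "norm (measure lborel {min t y..max t y} *\<^sub>R h t - integral {min t y..max t y} h)
           = norm (g y - g t - (y - t) *\<^sub>R h t)"
proof (cases "t \<le> y")
  case True
  then have "integral {t..y} h = g y - g t" using H integral_unique by blast
  then show ?thesis using True by (simp add: norm_minus_commute)
next
  case False
  then have "min t y = y" "max t y = t" "integral {y..t} h = g t - g y"
    using H[of y t] by (auto simp: integral_unique)
  then have "measure lborel {min t y..max t y} *\<^sub>R h t - integral {min t y..max t y} h
               = g y - g t - (y - t) *\<^sub>R h t"
    using False by (simp add: algebra_simps)
  then show ?thesis by simp
qed

lemma Henstock_bad_segments_total_length:
  fixes g h :: "real \<Rightarrow> 'a::euclidean_space"
  assumes H: "\<And>a b. a \<le> b \<Longrightarrow> (h has_integral (g b - g a)) {a..b}"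
    and Hen: "\<And>p. p tagged_partial_division_of {c..d} \<Longrightarrow> G fine p \<Longrightarrow>
                (\<Sum>(x,k)\<in>p. norm (measure lborel k *\<^sub>R h x - integral k h)) < e * \<eta>"
    and "\<eta> > 0" and "finite P"
    and P: "\<And>t y. (t, y) \<in> P \<Longrightarrow>
              t \<noteq> y \<and> {min t y..max t y} \<subseteq> G t \<inter> {c..d} \<and>
              \<eta> * \<bar>y - t\<bar> < norm (g y - g t - (y - t) *\<^sub>R h t)"
    and disj: "\<And>t y t' y'. (t, y) \<in> P \<Longrightarrow> (t', y') \<in> P \<Longrightarrow> (t, y) \<noteq> (t', y') \<Longrightarrow>
                 disjnt {min t y..max t y} {min t' y'..max t' y'}"
  shows "(\<Sum>(t, y)\<in>P. \<bar>y - t\<bar>) \<le> e"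
proof -
  define tag where "tag = (\<lambda>(t::real, y::real). (t, {min t y..max t y}))"
  have inj: "inj_on tag P"
  proof (rule inj_onI)
    fix i j assume ij: "i \<in> P" "j \<in> P" "tag i = tag j"
    obtain t y t' y' where i: "i = (t, y)" and j: "j = (t', y')" by fastforce
    have "t \<noteq> y" using P ij(1) i by blast
    then have "\<not> disjnt {min t y..max t y} {min t' y'..max t' y'}"
      using ij(3) by (auto simp: tag_def i j disjnt_def min_def max_def)
    then show "i = j" using disj ij i j by blast
  qed
  have div: "tag ` P tagged_partial_division_of {c..d}"
    unfolding tagged_partial_division_of_def
  proof (intro conjI allI impI)
    show "finite (tag ` P)" using \<open>finite P\<close> by simp
  next
    fix x k assume "(x, k) \<in> tag ` P"
    then obtain y where "(x, y) \<in> P" "k = {min x y..max x y}" by (auto simp: tag_def)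
    then show "x \<in> k" "k \<subseteq> {c..d}" "\<exists>a b. k = cbox a b" using P by auto
  next
    fix x1 k1 x2 k2
    assume asm: "(x1, k1) \<in> tag ` P \<and> (x2, k2) \<in> tag ` P \<and> (x1, k1) \<noteq> (x2, k2)"
    then obtain i j where ij: "i \<in> P" "j \<in> P" "(x1, k1) = tag i" "(x2, k2) = tag j" by blast
    moreover have "i \<noteq> j" using asm ij by auto
    ultimately have "disjnt k1 k2"
      using disj[of "fst i" "snd i" "fst j" "snd j"] by (simp add: tag_def case_prod_beta)
    then show "interior k1 \<inter> interior k2 = {}"
      using interior_subset by (auto simp: disjnt_def)
  qed
  have fine: "G fine tag ` P" using P by (auto simp: fine_def tag_def)
  have "\<eta> * (\<Sum>(t, y)\<in>P. \<bar>y - t\<bar>) = (\<Sum>(t, y)\<in>P. \<eta> * \<bar>y - t\<bar>)"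
    by (simp add: sum_distrib_left case_prod_unfold)
  also have "\<dots> \<le> (\<Sum>(t, y)\<in>P. norm (g y - g t - (y - t) *\<^sub>R h t))"
    by (rule sum_mono) (use P less_imp_le in fastforce)
  also have "\<dots> = (\<Sum>(x, k)\<in>tag ` P. norm (measure lborel k *\<^sub>R h x - integral k h))"
    unfolding sum.reindex[OF inj]
    by (rule sum.cong)
      (auto simp: tag_def norm_content_segment_minus_integral[OF H, symmetric] simp del: measure_lborel_Icc)
  also have "\<dots> < e * \<eta>" using Hen[OF div fine] .
  finally show ?thesis using \<open>\<eta> > 0\<close> by (simp add: mult.commute)
qed

lemma negligible_if_finely_covered_by_short_segments:
  fixes T :: "real set"
  assumes "\<And>e. 0 < e \<Longrightarrow> \<exists>K. (\<forall>x\<in>T. \<forall>d>0. \<exists>y. y \<noteq> x \<and> \<bar>y - x\<bar> < d \<and> (x, y) \<in> K) \<and>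
      (\<forall>P. finite P \<longrightarrow> P \<subseteq> K \<longrightarrow>
        (\<forall>t y t' y'. (t, y) \<in> P \<longrightarrow> (t', y') \<in> P \<longrightarrow> (t, y) \<noteq> (t', y') \<longrightarrow>
           disjnt {min t y..max t y} {min t' y'..max t' y'}) \<longrightarrow>
        (\<Sum>(t, y)\<in>P. \<bar>y - t\<bar>) \<le> e)"
  shows "negligible T"
  unfolding negligible_outer_le
proof (intro allI impI)
  fix e :: real assume "e > 0"
  then obtain K0 where cover0: "\<forall>x\<in>T. \<forall>d>0. \<exists>y. y \<noteq> x \<and> \<bar>y - x\<bar> < d \<and> (x, y) \<in> K0"
    and bound: "\<And>P. finite P \<Longrightarrow> P \<subseteq> K0 \<Longrightarrow>
        (\<forall>t y t' y'. (t, y) \<in> P \<longrightarrow> (t', y') \<in> P \<longrightarrow> (t, y) \<noteq> (t', y') \<longrightarrow>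
           disjnt {min t y..max t y} {min t' y'..max t' y'}) \<Longrightarrow>
        (\<Sum>(t, y)\<in>P. \<bar>y - t\<bar>) \<le> e"
    using assms[OF \<open>e > 0\<close>] by auto
  define K where "K = {(t, y) \<in> K0. t \<noteq> y}"
  define seg where "seg = (\<lambda>(t::real, y::real). {min t y..max t y})"
  define a where "a = (\<lambda>(t::real, y::real). (t + y) / 2)"
  define r where "r = (\<lambda>(t::real, y::real). \<bar>y - t\<bar> / 2)"
  have seg_cball: "cball (a i) (r i) = seg i" for i
    by (cases i) (auto simp: a_def r_def seg_def cball_eq_atLeastAtMost min_def max_def field_simps)
  have r_pos: "0 < r i" if "i \<in> K" for i using that by (auto simp: K_def r_def)
  have cover: "\<exists>i. i \<in> K \<and> x \<in> cball (a i) (r i) \<and> r i < d" if "x \<in> T" "0 < d" for x d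
  proof -
    obtain y where "y \<noteq> x" "\<bar>y - x\<bar> < d" "(x, y) \<in> K0"
      using cover0 \<open>x \<in> T\<close> \<open>0 < d\<close> by blast
    then have "(x, y) \<in> K" "r (x, y) < d"
      using \<open>0 < d\<close> by (auto simp: K_def r_def)
    moreover have "x \<in> cball (a (x, y)) (r (x, y))" by (simp add: seg_cball seg_def)
    ultimately show ?thesis by blast
  qed
  obtain C where "countable C" "C \<subseteq> K"
    and disj: "pairwise (\<lambda>i j. disjnt (cball (a i) (r i)) (cball (a j) (r j))) C"
    and neg: "negligible (T - (\<Union>i\<in>C. cball (a i) (r i)))"
    by (rule Vitali_covering_theorem_cballs[of K r T a, OF r_pos cover])
  have seg_lmeasurable: "seg i \<in> lmeasurable" for i
    by (cases i) (simp add: seg_def)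
  have finite_bound: "measure lebesgue (\<Union>i\<in>F. seg i) \<le> e" if "F \<subseteq> C" "finite F" for F
  proof -
    have "measure lebesgue (\<Union>i\<in>F. seg i) \<le> (\<Sum>i\<in>F. measure lebesgue (seg i))"
      using seg_lmeasurable by (intro measure_UNION_le \<open>finite F\<close>) blast
    also have "\<dots> = (\<Sum>(t, y)\<in>F. \<bar>y - t\<bar>)"
      by (rule sum.cong) (auto simp: seg_def min_def max_def)
    also have "\<dots> \<le> e"
    proof (rule bound[OF \<open>finite F\<close>])
      show "F \<subseteq> K0" using that \<open>C \<subseteq> K\<close> by (auto simp: K_def)
      have "pairwise (\<lambda>i j. disjnt (seg i) (seg j)) C" using disj by (simp only: seg_cball)
      then have "disjnt (seg (t, y)) (seg (t', y'))"
        if "(t, y) \<in> F" "(t', y') \<in> F" "(t, y) \<noteq> (t', y')" for t y t' y'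
        using that \<open>F \<subseteq> C\<close> unfolding pairwise_def by blast
      then show "\<forall>t y t' y'. (t, y) \<in> F \<longrightarrow> (t', y') \<in> F \<longrightarrow> (t, y) \<noteq> (t', y') \<longrightarrow>
                   disjnt {min t y..max t y} {min t' y'..max t' y'}"
        by (simp add: seg_def)
    qed
    finally show ?thesis .
  qed
  define U where "U = (\<Union>i\<in>C. seg i)"
  have U: "U \<in> lmeasurable" "measure lebesgue U \<le> e"
    unfolding U_def using seg_lmeasurable
    by (fastforce intro: fmeasurable_UN_bound[OF \<open>countable C\<close> _ finite_bound]
        measure_UN_bound[OF \<open>countable C\<close> _ finite_bound])+
  have null: "T - U \<in> null_sets lebesgue"
    using neg by (simp add: U_def seg_cball negligible_iff_null_sets)
  show "\<exists>V. T \<subseteq> V \<and> V \<in> lmeasurable \<and> measure lebesgue V \<le> e"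
  proof (intro exI conjI)
    show "T \<subseteq> U \<union> (T - U)" by blast
    show "U \<union> (T - U) \<in> lmeasurable"
      using U(1) fmeasurableI_null_sets[OF null] by (rule fmeasurable.Un)
    show "measure lebesgue (U \<union> (T - U)) \<le> e"
      using U measure_Un_null_set[OF fmeasurableD[OF U(1)] null] by simp
  qed
qed

lemma negligible_linear_approximation_failure:
  fixes g h :: "real \<Rightarrow> 'a::euclidean_space"
  assumes H: "\<And>a b. a \<le> b \<Longrightarrow> (h has_integral (g b - g a)) {a..b}" and "\<eta> > 0"
  shows "negligible {t \<in> {-n..n}. \<forall>d>0. \<exists>y. \<bar>y - t\<bar> < d \<and>
                        \<eta> * \<bar>y - t\<bar> < norm (g y - g t - (y - t) *\<^sub>R h t)}"
    (is "negligible ?T")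
proof (rule negligible_if_finely_covered_by_short_segments)
  fix e :: real assume "e > 0"
  have "h integrable_on cbox (-n-1) (n+1)"
    using H[of "-n-1" "n+1"] by (cases "-n-1 \<le> n+1") (auto simp: integrable_on_def)
  then obtain G where "gauge G"
    and Hen: "\<And>p. p tagged_partial_division_of {-n-1..n+1} \<Longrightarrow> G fine p \<Longrightarrow>
                (\<Sum>(x,k)\<in>p. norm (measure lborel k *\<^sub>R h x - integral k h)) < e * \<eta>"
    using Henstock_lemma[of h "-n-1" "n+1" "e * \<eta>"] \<open>e > 0\<close> \<open>\<eta> > 0\<close> by auto
  define K where "K = {(t, y). t \<in> ?T \<and> y \<noteq> t \<and> \<bar>y - t\<bar> < 1 \<and> {min t y..max t y} \<subseteq> G t \<and>
                     \<eta> * \<bar>y - t\<bar> < norm (g y - g t - (y - t) *\<^sub>R h t)}"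
  have "\<exists>y. y \<noteq> x \<and> \<bar>y - x\<bar> < d \<and> (x, y) \<in> K" if x: "x \<in> ?T" and d: "0 < d" for x d
  proof -
    obtain \<rho> where "\<rho> > 0" "ball x \<rho> \<subseteq> G x"
      using \<open>gauge G\<close> unfolding gauge_def by (meson open_contains_ball)
    moreover have "\<forall>d>0. \<exists>y. \<bar>y - x\<bar> < d \<and> \<eta> * \<bar>y - x\<bar> < norm (g y - g x - (y - x) *\<^sub>R h x)"
      using x by simp
    ultimately obtain y where y: "\<bar>y - x\<bar> < min (min d 1) \<rho>"
      "\<eta> * \<bar>y - x\<bar> < norm (g y - g x - (y - x) *\<^sub>R h x)"
      using d by (meson min.strict_order_iff min_less_iff_conj zero_less_one)
    have "\<bar>y - x\<bar> < \<rho>" using y(1) by simp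
    then have "{min x y..max x y} \<subseteq> ball x \<rho>"
      by (auto simp: dist_real_def abs_if split: if_splits)
    then have "(x, y) \<in> K" using y x \<open>ball x \<rho> \<subseteq> G x\<close> by (auto simp: K_def)
    moreover have "y \<noteq> x" using y(2) by auto
    ultimately show ?thesis using y(1) by auto
  qed
  moreover have "(\<Sum>(t, y)\<in>P. \<bar>y - t\<bar>) \<le> e"
    if "finite P" "P \<subseteq> K" and disj: "\<forall>t y t' y'. (t, y) \<in> P \<longrightarrow> (t', y') \<in> P \<longrightarrow> (t, y) \<noteq> (t', y') \<longrightarrow>
           disjnt {min t y..max t y} {min t' y'..max t' y'}" for P
  proof (rule Henstock_bad_segments_total_length[OF H Hen \<open>\<eta> > 0\<close> \<open>finite P\<close>])
    show "t \<noteq> y \<and> {min t y..max t y} \<subseteq> G t \<inter> {-n-1..n+1} \<and>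
            \<eta> * \<bar>y - t\<bar> < norm (g y - g t - (y - t) *\<^sub>R h t)" if "(t, y) \<in> P" for t y
    proof -
      have "(t, y) \<in> K" using that \<open>P \<subseteq> K\<close> by blast
      then have "t \<in> {-n..n}" "\<bar>y - t\<bar> < 1" by (simp_all add: K_def)
      then have "{min t y..max t y} \<subseteq> {-n-1..n+1}" by (auto simp: abs_less_iff)
      then show ?thesis using \<open>(t, y) \<in> K\<close> by (simp add: K_def)
    qed
  qed (use disj in auto)
  ultimately show "\<exists>K. (\<forall>x\<in>?T. \<forall>d>0. \<exists>y. y \<noteq> x \<and> \<bar>y - x\<bar> < d \<and> (x, y) \<in> K) \<and>
      (\<forall>P. finite P \<longrightarrow> P \<subseteq> K \<longrightarrow>
        (\<forall>t y t' y'. (t, y) \<in> P \<longrightarrow> (t', y') \<in> P \<longrightarrow> (t, y) \<noteq> (t', y') \<longrightarrow>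
           disjnt {min t y..max t y} {min t' y'..max t' y'}) \<longrightarrow>
        (\<Sum>(t, y)\<in>P. \<bar>y - t\<bar>) \<le> e)"
    by (intro exI[of _ K] conjI ballI allI impI) auto
qed

lemma indefinite_integral_has_vector_derivative_ae:
  fixes g h :: "real \<Rightarrow> 'a::euclidean_space"
  assumes H: "\<And>a b. a \<le> b \<Longrightarrow> (h has_integral (g b - g a)) {a..b}"
  shows "negligible {t. \<not> (g has_vector_derivative h t) (at t)}"
proof -
  define S where "S n m = {t \<in> {-real n..real n}. \<forall>d>0. \<exists>y. \<bar>y - t\<bar> < d \<and>
                   1 / real (Suc m) * \<bar>y - t\<bar> < norm (g y - g t - (y - t) *\<^sub>R h t)}" for n m :: nat
  have "negligible (S n m)" for n m
    unfolding S_def by (rule negligible_linear_approximation_failure[OF H]) auto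
  then have "negligible (\<Union>n. \<Union>m. S n m)" by (auto intro!: negligible_countable_Union)
  moreover have "t \<in> (\<Union>n. \<Union>m. S n m)" if "\<not> (g has_vector_derivative h t) (at t)" for t
  proof (rule ccontr)
    assume "t \<notin> (\<Union>n. \<Union>m. S n m)"
    obtain n :: nat where "\<bar>t\<bar> \<le> real n" using real_arch_simple by blast
    have "(g has_derivative (\<lambda>x. x *\<^sub>R h t)) (at t)"
      unfolding has_derivative_at_alt
    proof (intro conjI allI impI)
      show "bounded_linear (\<lambda>x. x *\<^sub>R h t)" by (rule bounded_linear_scaleR_left)
      fix e :: real assume "e > 0"
      then obtain m :: nat where m: "1 / real (Suc m) < e" by (metis nat_approx_posE)
      have "t \<notin> S n m" using \<open>t \<notin> (\<Union>n. \<Union>m. S n m)\<close> by blast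
      then obtain d where "0 < d" and "\<forall>y. \<bar>y - t\<bar> < d \<longrightarrow>
          \<not> 1 / real (Suc m) * \<bar>y - t\<bar> < norm (g y - g t - (y - t) *\<^sub>R h t)"
        using \<open>\<bar>t\<bar> \<le> real n\<close> unfolding S_def by auto
      then have d: "norm (g y - g t - (y - t) *\<^sub>R h t) \<le> 1 / real (Suc m) * \<bar>y - t\<bar>"
        if "\<bar>y - t\<bar> < d" for y
        using that not_less by blast
      show "\<exists>d>0. \<forall>y. norm (y - t) < d \<longrightarrow> norm (g y - g t - (y - t) *\<^sub>R h t) \<le> e * norm (y - t)"
      proof (intro exI conjI allI impI)
        fix y assume "norm (y - t) < d"
        then have "norm (g y - g t - (y - t) *\<^sub>R h t) \<le> 1 / real (Suc m) * \<bar>y - t\<bar>" using d by simp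
        also have "\<dots> \<le> e * norm (y - t)" using mult_right_mono[OF less_imp_le[OF m], of "\<bar>y - t\<bar>"] by simp
        finally show "norm (g y - g t - (y - t) *\<^sub>R h t) \<le> e * norm (y - t)" .
      qed (rule \<open>0 < d\<close>)
    qed
    then show False using that by (simp add: has_vector_derivative_def)
  qed
  ultimately show ?thesis by (blast intro: negligible_subset)
qed

section \<open>Comparison at a point of contact\<close>

lemma real_derivative_zero_at_interior_max:
  fixes f :: "real \<Rightarrow> real"
  assumes "(f has_real_derivative l) (at x)" "x \<in> {a<..<b}" "\<And>y. y \<in> {a<..<b} \<Longrightarrow> f y \<le> f x"
  shows "l = 0"
proof (rule DERIV_local_max[OF assms(1)])
  show "0 < min (x - a) (b - x)" using assms(2) by simp
  show "\<forall>y. \<bar>x - y\<bar> < min (x - a) (b - x) \<longrightarrow> f y \<le> f x"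
    using assms(3) by (auto simp: abs_less_iff)
qed

lemma nonneg_if_derivative_ge_neg_square:
  fixes v p :: "real \<Rightarrow> real"
  assumes "continuous_on {a..b} v" and "v a = 0" and bounded: "\<And>s. s \<in> {a..b} \<Longrightarrow> \<bar>v s\<bar> \<le> 1"
    and "0 \<le> C" and "C * (b - a) < 1" and "negligible N"
    and prim: "\<And>x y. a \<le> x \<Longrightarrow> x \<le> y \<Longrightarrow> y \<le> b \<Longrightarrow> (p has_integral (v y - v x)) {x..y}"
    and p_ge: "\<And>s. s \<in> {a..b} - N \<Longrightarrow> - C * (v s)\<^sup>2 \<le> p s"
    and "s \<in> {a..b}"
  shows "0 \<le> v s"
proof (rule ccontr)
  assume "\<not> 0 \<le> v s"
  obtain t' where t': "t' \<in> {a..s}" "\<And>y. y \<in> {a..s} \<Longrightarrow> v t' \<le> v y"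
    using continuous_attains_inf[of "{a..s}" v] continuous_on_subset[OF assms(1)] \<open>s \<in> {a..b}\<close>
    by auto
  define m where "m = v t'"
  have "m < 0" using t'(2)[of s] \<open>\<not> 0 \<le> v s\<close> \<open>s \<in> {a..b}\<close> by (simp add: m_def)
  \<comment> \<open>on \<open>(t0, t']\<close>, between the last zero \<open>t0\<close> of \<open>v\<close> and its minimum \<open>m\<close>, integrating
     \<open>v' \<ge> - C m\<^sup>2\<close> gives \<open>- m \<le> C m\<^sup>2 (t' - t0)\<close>, impossible on an interval shorter than \<open>1 / C\<close>\<close>
  define Z where "Z = {a..t'} \<inter> {y. 0 \<le> v y}"
  define t0 where "t0 = Sup Z"
  have "continuous_on {a..t'} v"
    using continuous_on_subset[OF assms(1)] t' \<open>s \<in> {a..b}\<close> by auto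
  then have "closed ({a..t'} \<inter> v -` {0..})" by (intro continuous_closed_preimage) auto
  moreover have "Z = {a..t'} \<inter> v -` {0..}" by (auto simp: Z_def)
  ultimately have "closed Z" by simp
  then have "t0 \<in> Z" unfolding t0_def
    using \<open>v a = 0\<close> t' by (intro closed_contains_Sup) (auto simp: Z_def)
  then have t0: "a \<le> t0" "t0 \<le> t'" "0 \<le> v t0" by (auto simp: Z_def)
  then have "t0 < t'" using \<open>m < 0\<close> m_def by (cases "t0 = t'") auto
  have negative: "v y < 0" if "y \<in> {t0<..t'}" for y
  proof (rule ccontr)
    assume "\<not> v y < 0"
    then have "y \<le> t0" unfolding t0_def using that t0 by (intro cSup_upper) (auto simp: Z_def)
    then show False using that by simp
  qed
  have p_lower: "- C * m\<^sup>2 \<le> p y" if "y \<in> {t0..t'}" "y \<notin> N \<union> {t0}" for y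
  proof -
    have "m \<le> v y" "v y < 0" using that t0 t' negative by (auto simp: m_def)
    then have "C * (v y)\<^sup>2 \<le> C * m\<^sup>2"
      using \<open>0 \<le> C\<close> by (intro mult_left_mono) (auto simp: abs_le_square_iff[symmetric])
    moreover have "y \<in> {a..b} - N" using that t0 t' \<open>s \<in> {a..b}\<close> by auto
    ultimately show ?thesis using p_ge[of y] by simp
  qed
  have const: "((\<lambda>_. - C * m\<^sup>2) has_integral (- C * m\<^sup>2 * (t' - t0))) {t0..t'}"
    using has_integral_const_real[of "- C * m\<^sup>2" t0 t'] \<open>t0 < t'\<close> by (simp add: mult.commute)
  have "(p has_integral (v t' - v t0)) {t0..t'}"
    using prim t0 t' \<open>s \<in> {a..b}\<close> by simp
  then have "- C * m\<^sup>2 * (t' - t0) \<le> v t' - v t0"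
    by (rule has_integral_le_off_negligible[where N = "N \<union> {t0}", OF const _ _ p_lower])
      (simp add: \<open>negligible N\<close>)
  then have "- m \<le> (- m) * (C * (- m) * (t' - t0))"
    using t0 by (simp add: m_def power2_eq_square algebra_simps)
  then have "1 \<le> C * (- m) * (t' - t0)"
    using \<open>m < 0\<close> by (metis mult_le_cancel_left_pos mult.right_neutral neg_0_less_iff_less)
  also have "\<dots> \<le> C * 1 * (b - a)"
    using bounded[of t'] t0 t' \<open>s \<in> {a..b}\<close> \<open>0 \<le> C\<close> \<open>m < 0\<close>
    by (intro mult_mono) (auto simp: m_def)
  finally show False using \<open>C * (b - a) < 1\<close> by simp
qed

lemma curvature_excess_lower_bound:
  fixes \<epsilon> u v w \<kappa> :: real
  assumes "0 < \<epsilon>" "\<epsilon> < 1" "0 \<le> u" "u \<le> \<epsilon>" "u\<^sup>2 + v\<^sup>2 + w\<^sup>2 = 1" "0 < w"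
    and "\<epsilon> / sqrt (1 - \<epsilon>\<^sup>2) < \<kappa>"
  shows "- (\<epsilon> / (1 - \<epsilon>\<^sup>2)) * v\<^sup>2 \<le> - u + \<kappa> * w"
proof -
  define \<rho> where "\<rho> = sqrt (1 - \<epsilon>\<^sup>2)"
  have "\<epsilon>\<^sup>2 < 1" using assms(1,2) by (simp add: power_less_one_iff)
  then have "0 < \<rho>" "\<rho>\<^sup>2 = 1 - \<epsilon>\<^sup>2" by (simp_all add: \<rho>_def)
  \<comment> \<open>\<open>w\<^sup>2 + v\<^sup>2 \<ge> \<rho>\<^sup>2\<close> since \<open>u \<le> \<epsilon>\<close>, and \<open>\<rho> w \<ge> w\<^sup>2\<close> unless \<open>w \<ge> \<rho>\<close>\<close>
  have key: "\<rho>\<^sup>2 - v\<^sup>2 \<le> \<rho> * w"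
  proof (cases "\<rho> \<le> w")
    case True
    then have "\<rho> * \<rho> \<le> \<rho> * w" using \<open>0 < \<rho>\<close> by (simp add: mult_left_mono)
    then show ?thesis using zero_le_square[of v] unfolding power2_eq_square by linarith
  next
    case False
    have "u\<^sup>2 \<le> \<epsilon>\<^sup>2" using assms(3,4) by (simp add: power_mono)
    moreover have "w * w \<le> \<rho> * w" using False \<open>0 < w\<close> by (simp add: mult_right_mono)
    ultimately show ?thesis using assms(5) \<open>\<rho>\<^sup>2 = 1 - \<epsilon>\<^sup>2\<close> by (simp add: power2_eq_square)
  qed
  have "- (\<epsilon> / \<rho>\<^sup>2) * v\<^sup>2 \<le> - \<epsilon> + (\<epsilon> / \<rho>) * w"
  proof -
    have "- (\<epsilon> / \<rho>\<^sup>2) * v\<^sup>2 + \<epsilon> = (\<epsilon> / \<rho>\<^sup>2) * (\<rho>\<^sup>2 - v\<^sup>2)"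
      using \<open>0 < \<rho>\<close> by (simp add: field_simps)
    also have "\<dots> \<le> (\<epsilon> / \<rho>\<^sup>2) * (\<rho> * w)"
      using key assms(1) by (intro mult_left_mono) auto
    also have "\<dots> = (\<epsilon> / \<rho>) * w" using \<open>0 < \<rho>\<close> by (simp add: power2_eq_square)
    finally show ?thesis by simp
  qed
  also have "\<dots> \<le> - u + \<kappa> * w"
    using assms(4,6,7) mult_right_mono[of "\<epsilon> / \<rho>" \<kappa> w] by (simp add: \<rho>_def)
  finally show ?thesis using \<open>\<rho>\<^sup>2 = 1 - \<epsilon>\<^sup>2\<close> by simp
qed

lemma curvature_along_cap_boundary:
  fixes u v w p \<kappa> :: "real \<Rightarrow> real"
  assumes "negligible N" "0 < \<delta>"
    and du: "\<And>s. (u has_real_derivative v s) (at s)"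
    and dv: "\<And>s. s \<notin> N \<Longrightarrow> (v has_real_derivative p s) (at s)"
    and p: "\<And>s. s \<notin> N \<Longrightarrow> p s = - u s + \<kappa> s * w s"
    and unit: "\<And>s. (u s)\<^sup>2 + (v s)\<^sup>2 + (w s)\<^sup>2 = 1"
    and on_boundary: "\<And>s. s \<in> {s0..s0 + \<delta>} \<Longrightarrow> u s = \<epsilon>"
    and w_pos: "\<And>s. s \<in> {s0..s0 + \<delta>} \<Longrightarrow> 0 < w s"
  shows "\<exists>s \<in> {s0<..<s0 + \<delta>} - N. \<kappa> s = \<epsilon> / sqrt (1 - \<epsilon>\<^sup>2)"
proof -
  have v_eq: "v s = 0" if "s \<in> {s0<..<s0 + \<delta>}" for s
    using that on_boundary by (intro real_derivative_zero_at_interior_max[OF du, of s s0 "s0 + \<delta>"]) auto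
  obtain s where s: "s \<in> {s0<..<s0 + \<delta>}" "s \<notin> N"
  proof -
    have "\<not> negligible {s0<..<s0 + \<delta>}"
      using \<open>0 < \<delta>\<close> negligible_interval(2)[of s0 "s0 + \<delta>"] by simp
    then have "\<not> {s0<..<s0 + \<delta>} \<subseteq> N" using \<open>negligible N\<close> negligible_subset by blast
    then show ?thesis using that by blast
  qed
  have "p s = 0"
    using s v_eq by (intro real_derivative_zero_at_interior_max[OF dv, of s s0 "s0 + \<delta>"]) auto
  then have "\<kappa> s * w s = \<epsilon>" using p[OF s(2)] on_boundary[of s] s(1) by simp
  moreover have "w s = sqrt (1 - \<epsilon>\<^sup>2)"
    using unit[of s] on_boundary[of s] v_eq[OF s(1)] w_pos[of s] s(1)
    by (auto intro: real_sqrt_unique[symmetric])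
  ultimately have "\<kappa> s = \<epsilon> / sqrt (1 - \<epsilon>\<^sup>2)" using w_pos[of s] s(1) by (auto simp: field_simps)
  then show ?thesis using s by blast
qed

lemma curvature_bound_at_cap_contact:
  fixes u v w p \<kappa> :: "real \<Rightarrow> real"
  assumes \<epsilon>: "0 < \<epsilon>" "\<epsilon> < 1" and "negligible N" and "s0 < s1"
    and du: "\<And>s. (u has_real_derivative v s) (at s)"
    and dv: "\<And>s. s \<notin> N \<Longrightarrow> (v has_real_derivative p s) (at s)"
    and prim: "\<And>x y. x \<le> y \<Longrightarrow> (p has_integral (v y - v x)) {x..y}"
    and p: "\<And>s. s \<notin> N \<Longrightarrow> p s = - u s + \<kappa> s * w s"
    and unit: "\<And>s. (u s)\<^sup>2 + (v s)\<^sup>2 + (w s)\<^sup>2 = 1"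
    and "continuous_on UNIV w"
    and below: "\<And>s. s \<in> {s0..s1} \<Longrightarrow> u s \<le> \<epsilon>"
    and "u s0 = \<epsilon>" "v s0 = 0" "0 < w s0"
  shows "\<exists>s \<in> {s0<..<s1} - N. \<kappa> s \<le> \<epsilon> / sqrt (1 - \<epsilon>\<^sup>2)"
proof (rule ccontr)
  assume "\<not> ?thesis"
  then have excess: "\<epsilon> / sqrt (1 - \<epsilon>\<^sup>2) < \<kappa> s" if "s \<in> {s0<..<s1}" "s \<notin> N" for s
    using that by force
  define C where "C = \<epsilon> / (1 - \<epsilon>\<^sup>2)"
  have "\<epsilon>\<^sup>2 < 1" using \<epsilon> by (simp add: power_less_one_iff)
  then have "0 < C" using \<epsilon> by (simp add: C_def)
  have "isCont u s0" using du by (rule DERIV_isCont)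
  then obtain d1 where "0 < d1" and d1: "\<And>y. \<bar>y - s0\<bar> < d1 \<Longrightarrow> 0 < u y"
    using \<open>u s0 = \<epsilon>\<close> \<epsilon> unfolding continuous_at_eps_delta dist_real_def
    by (metis abs_diff_less_iff diff_self)
  obtain d2 where "0 < d2" and d2: "\<And>y. \<bar>y - s0\<bar> < d2 \<Longrightarrow> 0 < w y"
    using \<open>continuous_on UNIV w\<close> \<open>0 < w s0\<close>
    unfolding continuous_on_eq_continuous_at[OF open_UNIV] continuous_at_eps_delta dist_real_def
    by (metis UNIV_I abs_diff_less_iff diff_self)
  define \<delta> where "\<delta> = min (min d1 d2) (min (s1 - s0) (1 / C)) / 2"
  have "0 < \<delta>" "\<delta> < s1 - s0" "\<delta> < d1" "\<delta> < d2"
    using \<open>0 < d1\<close> \<open>0 < d2\<close> \<open>s0 < s1\<close> \<open>0 < C\<close> by (auto simp: \<delta>_def)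
  have "C * (2 * \<delta>) \<le> C * (1 / C)"
    using \<open>0 < C\<close> by (intro mult_left_mono) (auto simp: \<delta>_def)
  then have "C * \<delta> < 1" using \<open>0 < C\<close> \<open>0 < \<delta>\<close> by simp
  have near: "s \<in> {s0..s1} \<and> 0 < u s \<and> 0 < w s" if "s \<in> {s0..s0 + \<delta>}" for s
    using that d1[of s] d2[of s] \<open>\<delta> < s1 - s0\<close> \<open>\<delta> < d1\<close> \<open>\<delta> < d2\<close> by auto
  \<comment> \<open>excess curvature turns \<open>v' = - u + \<kappa> w\<close> into the Riccati-type inequality \<open>v' \<ge> - C v\<^sup>2\<close>\<close>
  have p_lower: "- C * (v s)\<^sup>2 \<le> p s" if "s \<in> {s0..s0 + \<delta>} - (N \<union> {s0})" for s
    using that near[of s] curvature_excess_lower_bound[OF \<epsilon> _ below unit, of s "\<kappa> s"] excess[of s] p[of s]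
      \<open>\<delta> < s1 - s0\<close> by (auto simp: C_def)
  have v_bounded: "\<bar>v s\<bar> \<le> 1" for s
  proof -
    have "(v s)\<^sup>2 \<le> 1" using unit[of s] zero_le_power2[of "u s"] zero_le_power2[of "w s"] by linarith
    then show ?thesis by (simp add: abs_square_le_1)
  qed
  have v_nonneg: "0 \<le> v s" if "s \<in> {s0..s0 + \<delta>}" for s
    using nonneg_if_derivative_ge_neg_square[where N = "N \<union> {s0}",
        OF continuous_on_subset[OF primitive_continuous[OF prim]] \<open>v s0 = 0\<close> v_bounded _ _ _ _ p_lower that]
      \<open>0 < C\<close> \<open>C * \<delta> < 1\<close> \<open>negligible N\<close> prim by simp
  have "u s = \<epsilon>" if "s \<in> {s0..s0 + \<delta>}" for s
  proof -
    have "u s0 \<le> u s"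
    proof (rule DERIV_nonneg_imp_increasing_open[of s0 s u])
      show "s0 \<le> s" using that by simp
      show "\<exists>y. (u has_real_derivative y) (at x) \<and> 0 \<le> y" if "s0 < x" "x < s" for x
        using du[of x] v_nonneg[of x] that \<open>s \<in> {s0..s0 + \<delta>}\<close> by auto
      show "continuous_on {s0..s} u"
        using du by (meson DERIV_isCont continuous_at_imp_continuous_on)
    qed
    then show ?thesis using below near that \<open>u s0 = \<epsilon>\<close> by force
  qed
  then obtain s where "s \<in> {s0<..<s0 + \<delta>} - N" "\<kappa> s = \<epsilon> / sqrt (1 - \<epsilon>\<^sup>2)"
    using curvature_along_cap_boundary[OF \<open>negligible N\<close> \<open>0 < \<delta>\<close> du dv p unit] near by blast
  then show False using excess[of s] \<open>\<delta> < s1 - s0\<close> by simp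
qed

section \<open>Unit-speed curves on the sphere\<close>

lemma has_real_derivative_inner:
  fixes f k :: "real \<Rightarrow> 'a::real_inner"
  assumes "(f has_vector_derivative f') (at x)" "(k has_vector_derivative k') (at x)"
  shows "((\<lambda>s. f s \<bullet> k s) has_real_derivative (f' \<bullet> k x + f x \<bullet> k')) (at x)"
proof -
  have "((\<lambda>s. f s \<bullet> k s) has_derivative (\<lambda>t. f x \<bullet> (t *\<^sub>R k') + (t *\<^sub>R f') \<bullet> k x)) (at x)"
    using has_derivative_inner[OF assms[unfolded has_vector_derivative_def]] .
  moreover have "(\<lambda>t. f x \<bullet> (t *\<^sub>R k') + (t *\<^sub>R f') \<bullet> k x) = (*) (f' \<bullet> k x + f x \<bullet> k')"
    by (auto simp: fun_eq_iff algebra_simps)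
  ultimately show ?thesis by (simp add: has_field_derivative_def)
qed

lemma has_real_derivative_inner_const:
  fixes f :: "real \<Rightarrow> 'a::real_inner"
  assumes "(f has_vector_derivative f') (at x)"
  shows "((\<lambda>s. f s \<bullet> c) has_real_derivative (f' \<bullet> c)) (at x)"
  using has_real_derivative_inner[OF assms has_vector_derivative_const[of c]] by simp

lemma has_real_derivative_component:
  fixes f :: "real \<Rightarrow> real^'n"
  assumes "(f has_vector_derivative f') (at x)"
  shows "((\<lambda>s. f s $ i) has_real_derivative f' $ i) (at x)"
  using has_real_derivative_inner_const[OF assms, of "axis i 1"] by (simp add: inner_axis)

lemma unit_norm_derivative_orthogonal:
  fixes f :: "real \<Rightarrow> 'a::real_inner"
  assumes "\<And>s. norm (f s) = 1" "(f has_vector_derivative f') (at t)"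
  shows "f t \<bullet> f' = 0"
proof -
  have "((\<lambda>s. f s \<bullet> f s) has_real_derivative (f' \<bullet> f t + f t \<bullet> f')) (at t)"
    using has_real_derivative_inner[OF assms(2) assms(2)] .
  moreover have "\<forall>y. \<bar>t - y\<bar> < 1 \<longrightarrow> f y \<bullet> f y \<le> f t \<bullet> f t"
    using assms(1) by (simp add: norm_eq_1)
  ultimately have "f' \<bullet> f t + f t \<bullet> f' = 0" by (rule DERIV_local_max[OF _ zero_less_one])
  then show ?thesis by (simp add: inner_commute)
qed

lemma orthonormal_pair_cross3_expansion:
  fixes a b x :: "real^3"
  assumes "norm a = 1" "norm b = 1" "a \<bullet> b = 0"
  shows "x = (x \<bullet> a) *\<^sub>R a + (x \<bullet> b) *\<^sub>R b + (x \<bullet> cross3 a b) *\<^sub>R cross3 a b"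
proof -
  have a: "a$1*a$1 + a$2*a$2 + a$3*a$3 = 1" using assms(1) by (simp add: norm_eq_1 inner_vec_def sum_3)
  have b: "b$1*b$1 + b$2*b$2 + b$3*b$3 = 1" using assms(2) by (simp add: norm_eq_1 inner_vec_def sum_3)
  have ab: "a$1*b$1 + a$2*b$2 + a$3*b$3 = 0" using assms(3) by (simp add: inner_vec_def sum_3)
  show ?thesis
    unfolding vec_eq_iff forall_3 using a b ab
    by (simp add: inner_vec_def sum_3 cross3_simps) (intro conjI; algebra)
qed

lemma orthonormal_pair_cross3_inner_self:
  fixes a b x :: "real^3"
  assumes "norm a = 1" "norm b = 1" "a \<bullet> b = 0"
  shows "x \<bullet> x = (x \<bullet> a)\<^sup>2 + (x \<bullet> b)\<^sup>2 + (x \<bullet> cross3 a b)\<^sup>2"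
proof -
  have "x \<bullet> x = x \<bullet> ((x \<bullet> a) *\<^sub>R a + (x \<bullet> b) *\<^sub>R b + (x \<bullet> cross3 a b) *\<^sub>R cross3 a b)"
    using orthonormal_pair_cross3_expansion[OF assms, of x] by simp
  then show ?thesis by (simp add: inner_add_right power2_eq_square)
qed

lemma unit_speed_sphere_curve_acceleration:
  fixes \<gamma> g :: "real \<Rightarrow> real^3"
  assumes sphere: "\<And>s. norm (\<gamma> s) = 1" and d\<gamma>: "\<And>s. (\<gamma> has_vector_derivative g s) (at s)"
    and unit: "\<And>s. norm (g s) = 1" and dg: "(g has_vector_derivative h) (at t)"
  shows "h = - \<gamma> t + (h \<bullet> cross3 (\<gamma> t) (g t)) *\<^sub>R cross3 (\<gamma> t) (g t)"
proof -
  have \<gamma>g: "\<gamma> s \<bullet> g s = 0" for s by (rule unit_norm_derivative_orthogonal[OF sphere d\<gamma>])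
  have "g t \<bullet> h = 0" by (rule unit_norm_derivative_orthogonal[OF unit dg])
  moreover have "\<gamma> t \<bullet> h = -1"
  proof -
    have "((\<lambda>s. \<gamma> s \<bullet> g s) has_real_derivative (g t \<bullet> g t + \<gamma> t \<bullet> h)) (at t)"
      by (rule has_real_derivative_inner[OF d\<gamma> dg])
    moreover have "\<forall>y. \<bar>t - y\<bar> < 1 \<longrightarrow> \<gamma> y \<bullet> g y \<le> \<gamma> t \<bullet> g t" using \<gamma>g by simp
    ultimately have "g t \<bullet> g t + \<gamma> t \<bullet> h = 0" by (rule DERIV_local_max[OF _ zero_less_one])
    then show ?thesis using unit[of t] by (simp add: norm_eq_1)
  qed
  ultimately show ?thesis
    using orthonormal_pair_cross3_expansion[OF sphere[of t] unit[of t] \<gamma>g[of t], of h]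
    by (simp add: inner_commute)
qed

lemma unit_speed_sphere_curve_height:
  fixes \<gamma> g h :: "real \<Rightarrow> real^3"
  assumes sphere: "\<And>s. norm (\<gamma> s) = 1" and d\<gamma>: "\<And>s. (\<gamma> has_vector_derivative g s) (at s)"
    and g_unit: "\<And>s. norm (g s) = 1" and "continuous_on UNIV g"
    and Hh: "\<And>x y. x \<le> y \<Longrightarrow> (h has_integral (g y - g x)) {x..y}"
    and dg: "\<And>s. s \<notin> N \<Longrightarrow> (g has_vector_derivative h s) (at s)"
    and "norm c = 1"
  shows "\<And>s. ((\<lambda>s. \<gamma> s \<bullet> c) has_real_derivative g s \<bullet> c) (at s)"
    and "\<And>s. s \<notin> N \<Longrightarrow> ((\<lambda>s. g s \<bullet> c) has_real_derivative h s \<bullet> c) (at s)"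
    and "\<And>x y. x \<le> y \<Longrightarrow> ((\<lambda>s. h s \<bullet> c) has_integral (g y \<bullet> c - g x \<bullet> c)) {x..y}"
    and "\<And>s. s \<notin> N \<Longrightarrow>
           h s \<bullet> c = - (\<gamma> s \<bullet> c) + (h s \<bullet> cross3 (\<gamma> s) (g s)) * (c \<bullet> cross3 (\<gamma> s) (g s))"
    and "\<And>s. (\<gamma> s \<bullet> c)\<^sup>2 + (g s \<bullet> c)\<^sup>2 + (c \<bullet> cross3 (\<gamma> s) (g s))\<^sup>2 = 1"
    and "continuous_on UNIV (\<lambda>s. c \<bullet> cross3 (\<gamma> s) (g s))"
proof -
  have \<gamma>g: "\<gamma> s \<bullet> g s = 0" for s by (rule unit_norm_derivative_orthogonal[OF sphere d\<gamma>])
  show "((\<lambda>s. \<gamma> s \<bullet> c) has_real_derivative g s \<bullet> c) (at s)" for s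
    by (rule has_real_derivative_inner_const[OF d\<gamma>])
  show "((\<lambda>s. g s \<bullet> c) has_real_derivative h s \<bullet> c) (at s)" if "s \<notin> N" for s
    by (rule has_real_derivative_inner_const[OF dg[OF that]])
  show "((\<lambda>s. h s \<bullet> c) has_integral (g y \<bullet> c - g x \<bullet> c)) {x..y}" if "x \<le> y" for x y
    using has_integral_linear[OF Hh[OF that] bounded_linear_inner_left[of c]]
    by (simp add: o_def inner_diff_left)
  show "h s \<bullet> c = - (\<gamma> s \<bullet> c) + (h s \<bullet> cross3 (\<gamma> s) (g s)) * (c \<bullet> cross3 (\<gamma> s) (g s))"
    if "s \<notin> N" for s
    using arg_cong[OF unit_speed_sphere_curve_acceleration[OF sphere d\<gamma> g_unit dg[OF that]],
        of "\<lambda>x. x \<bullet> c"]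
    by (simp add: inner_diff_right inner_commute)
  show "(\<gamma> s \<bullet> c)\<^sup>2 + (g s \<bullet> c)\<^sup>2 + (c \<bullet> cross3 (\<gamma> s) (g s))\<^sup>2 = 1" for s
    using orthonormal_pair_cross3_inner_self[OF sphere g_unit \<gamma>g, of c] \<open>norm c = 1\<close>
    by (simp add: norm_eq_1 inner_commute)
  have "continuous_on UNIV \<gamma>"
    using d\<gamma> by (meson continuous_at_imp_continuous_on has_vector_derivative_continuous)
  then show "continuous_on UNIV (\<lambda>s. c \<bullet> cross3 (\<gamma> s) (g s))"
    by (intro continuous_intros continuous_on_cross \<open>continuous_on UNIV g\<close>)
qed

lemma cap_contact_normal_component_pos:
  fixes x t c :: "real^3"
  assumes "norm x = 1" "norm t = 1" "x \<bullet> t = 0" "c \<bullet> x = \<epsilon>" "c \<bullet> t = 0"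
    and "0 \<le> cross3 x t $ 3" and "\<epsilon> * x $ 3 < c $ 3"
  shows "0 < c \<bullet> cross3 x t"
proof -
  have "c $ 3 = \<epsilon> * x $ 3 + (c \<bullet> cross3 x t) * cross3 x t $ 3"
    using arg_cong[OF orthonormal_pair_cross3_expansion[OF assms(1-3), of c], of "\<lambda>y. y $ 3"] assms(4,5)
    by simp
  then show ?thesis using assms(6,7) by (smt (verit) mult_nonpos_nonneg)
qed

lemma W22_unit_speed_frame:
  fixes \<gamma> :: "real \<Rightarrow> real^3"
  assumes "W22_loop \<gamma>" and unit: "\<And>t. norm (vd \<gamma> t) = 1"
  obtains N g h where "negligible N" "continuous_on UNIV g"
    "\<And>t. (\<gamma> has_vector_derivative g t) (at t)" "\<And>t. norm (g t) = 1"
    "\<And>x y. x \<le> y \<Longrightarrow> (h has_integral (g y - g x)) {x..y}"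
    "\<And>t. t \<notin> N \<Longrightarrow> (g has_vector_derivative h t) (at t)"
    "\<And>t. t \<notin> N \<Longrightarrow> vd \<gamma> differentiable (at t) \<and> kappa \<gamma> t = h t \<bullet> cross3 (\<gamma> t) (g t)"
proof -
  obtain g h where Hg: "\<And>a b. a \<le> b \<Longrightarrow> (g has_integral (\<gamma> b - \<gamma> a)) {a..b}"
    and Hh: "\<And>a b. a \<le> b \<Longrightarrow> (h has_integral (g b - g a)) {a..b}"
    using assms(1) unfolding W22_loop_def by blast
  have "continuous_on UNIV g" by (rule primitive_continuous[OF Hh])
  have d\<gamma>: "(\<gamma> has_vector_derivative g t) (at t)" for t
    using primitive_has_vector_derivative[OF Hg \<open>continuous_on UNIV g\<close>] .
  then have vd_\<gamma>: "vd \<gamma> t = g t" for t by (rule vector_derivative_at)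
  define N where "N = {t. \<not> (g has_vector_derivative h t) (at t)}"
  have "negligible N" unfolding N_def by (rule indefinite_integral_has_vector_derivative_ae[OF Hh])
  moreover have "vd \<gamma> differentiable (at t) \<and> kappa \<gamma> t = h t \<bullet> cross3 (\<gamma> t) (g t)" if "t \<notin> N" for t
  proof -
    have "(g has_vector_derivative h t) (at t)" using that by (simp add: N_def)
    then show ?thesis
      using unit[of t] by (auto simp: vd_\<gamma> kappa_def vector_derivative_at intro: differentiableI_vector)
  qed
  ultimately show ?thesis
    using \<open>continuous_on UNIV g\<close> d\<gamma> unit Hh by (intro that) (auto simp: N_def vd_\<gamma>)
qed

section \<open>Polar curves, lifts and a family of caps\<close>

lemma polar_curve_angular_momentum_nonneg:
  fixes X Y R \<phi> :: "real \<Rightarrow> real"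
  assumes X: "\<And>s. X s = R s * cos (\<phi> s)" and Y: "\<And>s. Y s = R s * sin (\<phi> s)"
    and R: "\<And>s. 0 \<le> R s" and "isCont \<phi> s0" and "strict_mono \<phi>"
    and dX: "(X has_real_derivative X') (at s0)" and dY: "(Y has_real_derivative Y') (at s0)"
  shows "0 \<le> X s0 * Y' - Y s0 * X'"
proof (rule ccontr)
  assume neg: "\<not> ?thesis"
  \<comment> \<open>\<open>P s\<close> is the signed area swept from \<open>s0\<close>; it cannot decrease while \<open>\<phi>\<close> increases by less than \<open>\<pi>\<close>\<close>
  define P where "P = (\<lambda>s. X s0 * Y s - Y s0 * X s)"
  have dP: "(P has_real_derivative (X s0 * Y' - Y s0 * X')) (at s0)"
    unfolding P_def by (rule DERIV_diff[OF DERIV_cmult[OF dY] DERIV_cmult[OF dX]])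
  then obtain d' where "0 < d'" and d': "\<And>h. 0 < h \<Longrightarrow> h < d' \<Longrightarrow> P (s0 + h) < P s0"
    using DERIV_neg_dec_right[OF dP] neg by force
  obtain d where "0 < d" and d: "\<And>y. \<bar>y - s0\<bar> < d \<Longrightarrow> \<bar>\<phi> y - \<phi> s0\<bar> < pi"
    using \<open>isCont \<phi> s0\<close> pi_gt_zero unfolding continuous_at_eps_delta dist_real_def by blast
  define h where "h = min d d' / 2"
  have h: "0 < h" "h < d'" "h < d" using \<open>0 < d\<close> \<open>0 < d'\<close> by (auto simp: h_def)
  have "\<phi> s0 < \<phi> (s0 + h)" using \<open>strict_mono \<phi>\<close> h by (simp add: strict_mono_less)
  moreover have "\<phi> (s0 + h) - \<phi> s0 < pi" using d[of "s0 + h"] h by simp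
  ultimately have "0 < sin (\<phi> (s0 + h) - \<phi> s0)" by (intro sin_gt_zero) auto
  moreover have "P (s0 + h) = R s0 * R (s0 + h) * sin (\<phi> (s0 + h) - \<phi> s0)"
    unfolding P_def X Y sin_diff by (simp add: algebra_simps)
  ultimately have "0 \<le> P (s0 + h)" using R by simp
  moreover have "P s0 = 0" by (simp add: P_def mult.commute)
  ultimately show False using d'[OF h(1,2)] by simp
qed

lemma polar_curve_derivative_zero_at_origin:
  fixes X Y R \<phi> :: "real \<Rightarrow> real"
  assumes X: "\<And>s. X s = R s * cos (\<phi> s)" and Y: "\<And>s. Y s = R s * sin (\<phi> s)"
    and R: "\<And>s. 0 \<le> R s" and "isCont \<phi> s0" and "R s0 = 0"
    and dX: "(X has_real_derivative X') (at s0)" and dY: "(Y has_real_derivative Y') (at s0)"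
  shows "X' = 0 \<and> Y' = 0"
proof -
  have "0 < pi/4" by simp
  then obtain d where "0 < d" and d: "\<And>y. \<bar>y - s0\<bar> < d \<Longrightarrow> \<bar>\<phi> y - \<phi> s0\<bar> < pi/4"
    using \<open>isCont \<phi> s0\<close> unfolding continuous_at_eps_delta dist_real_def by blast
  \<comment> \<open>near \<open>s0\<close> the curve stays in the sector of angle \<open>\<pi>/2\<close> around direction \<open>\<phi> s0\<close>, so its
     projection onto every direction \<open>\<phi> s0 + \<beta>\<close>, \<open>0 \<le> \<beta> \<le> \<pi>/4\<close>, has a local minimum there\<close>
  have key: "X' * cos (\<phi> s0 + \<beta>) + Y' * sin (\<phi> s0 + \<beta>) = 0" if "0 \<le> \<beta>" "\<beta> \<le> pi/4" for \<beta>
  proof -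
    define q where "q = (\<lambda>s. X s * cos (\<phi> s0 + \<beta>) + Y s * sin (\<phi> s0 + \<beta>))"
    have dq: "(q has_real_derivative (X' * cos (\<phi> s0 + \<beta>) + Y' * sin (\<phi> s0 + \<beta>))) (at s0)"
      unfolding q_def by (rule DERIV_add[OF DERIV_cmult_right[OF dX] DERIV_cmult_right[OF dY]])
    have q: "q s = R s * cos (\<phi> s - (\<phi> s0 + \<beta>))" for s
      unfolding q_def X Y cos_diff by (simp add: algebra_simps)
    have "q s0 \<le> q y" if "\<bar>s0 - y\<bar> < d" for y
    proof -
      have "\<bar>\<phi> y - \<phi> s0\<bar> < pi/4" using d[of y] that by simp
      then have "0 < cos (\<phi> y - (\<phi> s0 + \<beta>))"
        using \<open>0 \<le> \<beta>\<close> \<open>\<beta> \<le> pi/4\<close> unfolding abs_less_iff by (intro cos_gt_zero_pi) linarith+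
      then show ?thesis using R[of y] \<open>R s0 = 0\<close> by (simp add: q)
    qed
    then show ?thesis using DERIV_local_min[OF dq \<open>0 < d\<close>] by blast
  qed
  have k0: "X' * cos (\<phi> s0) + Y' * sin (\<phi> s0) = 0" using key[of 0] by simp
  have "X' * cos (\<phi> s0 + pi/4) + Y' * sin (\<phi> s0 + pi/4) = 0" using key[of "pi/4"] by simp
  then have "(sqrt 2 / 2) * (X' * (cos (\<phi> s0) - sin (\<phi> s0)) + Y' * (sin (\<phi> s0) + cos (\<phi> s0))) = 0"
    by (simp add: cos_add sin_add cos_45 sin_45 algebra_simps)
  then have k1: "X' * (cos (\<phi> s0) - sin (\<phi> s0)) + Y' * (sin (\<phi> s0) + cos (\<phi> s0)) = 0" by simp
  have "(sin (\<phi> s0))\<^sup>2 + (cos (\<phi> s0))\<^sup>2 = 1" by simp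
  then show ?thesis using k0 k1 by (intro conjI; algebra)
qed

lemma degree_one_lift_shift:
  fixes \<phi> :: "real \<Rightarrow> real"
  assumes "\<And>s. \<phi> (s + 2*pi) = \<phi> s + 2*pi"
  shows "\<phi> (s + 2*pi*real n) = \<phi> s + 2*pi*real n \<and> \<phi> (s - 2*pi*real n) = \<phi> s - 2*pi*real n"
proof (induction n)
  case (Suc n)
  have "\<phi> (s + 2*pi*real (Suc n)) = \<phi> (s + 2*pi*real n) + 2*pi"
    using assms[of "s + 2*pi*real n"] by (simp add: algebra_simps)
  moreover have "\<phi> (s - 2*pi*real n) = \<phi> (s - 2*pi*real (Suc n)) + 2*pi"
    using assms[of "s - 2*pi*real (Suc n)"] by (simp add: algebra_simps)
  ultimately show ?case using Suc by (simp add: algebra_simps)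
qed simp

lemma degree_one_lift_surj:
  fixes \<phi> :: "real \<Rightarrow> real"
  assumes "continuous_on UNIV \<phi>" and "\<And>s. \<phi> (s + 2*pi) = \<phi> s + 2*pi"
  shows "surj \<phi>"
proof -
  have "y \<in> range \<phi>" for y
  proof -
    obtain n :: nat where "\<bar>y - \<phi> 0\<bar> / (2*pi) \<le> real n" using real_arch_simple by blast
    then have "\<bar>y - \<phi> 0\<bar> \<le> 2*pi*real n" by (simp add: field_simps)
    then have "\<phi> (0 - 2*pi*real n) \<le> y" "y \<le> \<phi> (0 + 2*pi*real n)"
      using degree_one_lift_shift[of \<phi>, OF assms(2), of 0 n] by auto
    then show ?thesis
      using IVT'[of \<phi> "0 - 2*pi*real n" y "0 + 2*pi*real n"] continuous_on_subset[OF assms(1)] by force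
  qed
  then show ?thesis by blast
qed

lemma isCont_exists_right_gt:
  fixes f :: "real \<Rightarrow> real"
  assumes "isCont f x" "c < f x" "0 < d"
  obtains y where "x < y" "y \<le> x + d" "c < f y"
proof -
  obtain e where "0 < e" and e: "\<And>y. dist y x < e \<Longrightarrow> dist (f y) (f x) < f x - c"
    using assms(1,2) unfolding continuous_at_eps_delta by (metis diff_gt_0_iff_gt)
  define y where "y = x + min d (e / 2)"
  have "dist y x < e" using \<open>0 < e\<close> assms(3) by (simp add: y_def dist_real_def)
  then have "c < f y" using e[of y] by (simp add: dist_real_def abs_less_iff)
  moreover have "x < y" "y \<le> x + d" using \<open>0 < e\<close> assms(3) by (auto simp: y_def)
  ultimately show ?thesis using that by blast
qed

lemma continuous_family_first_touch:
  fixes Q :: "real \<Rightarrow> real \<Rightarrow> real"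
  assumes cont: "continuous_on UNIV (\<lambda>(s, \<tau>). Q s \<tau>)" and "0 < T"
    and start: "r \<in> {sa<..<sb}" "\<epsilon> < Q r 0"
    and ends: "\<And>\<tau>. \<tau> \<in> {0<..T} \<Longrightarrow> Q sa \<tau> < \<epsilon> \<and> Q sb \<tau> < \<epsilon>"
    and top: "\<And>s. s \<in> {sa..sb} \<Longrightarrow> Q s T < \<epsilon>"
  obtains \<tau> s0 where "\<tau> \<in> {0<..<T}" "s0 \<in> {sa<..<sb}" "Q s0 \<tau> = \<epsilon>"
    "\<And>s. s \<in> {sa..sb} \<Longrightarrow> Q s \<tau> \<le> \<epsilon>"
proof -
  have isCont_Q: "isCont (Q s) t" for s t
  proof -
    have "continuous_on UNIV ((\<lambda>(s, \<tau>). Q s \<tau>) \<circ> Pair s)"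
      by (intro continuous_on_compose continuous_intros continuous_on_subset[OF cont]) auto
    then show ?thesis by (simp add: o_def continuous_on_eq_continuous_at)
  qed
  define K where "K = ({sa..sb} \<times> {0..T}) \<inter> {p. \<epsilon> \<le> Q (fst p) (snd p)}"
  have "compact K"
    unfolding K_def using cont
    by (intro compact_Int_closed compact_Times compact_Icc closed_Collect_le continuous_on_const)
      (simp_all add: case_prod_unfold)
  moreover have "(r, 0) \<in> K" using start \<open>0 < T\<close> by (auto simp: K_def)
  ultimately obtain p0 where "p0 \<in> K" and max: "\<And>p. p \<in> K \<Longrightarrow> snd p \<le> snd p0"
    using compact_attains_sup[of "snd ` K"] compact_continuous_image[OF continuous_on_snd[OF continuous_on_id]]
    by (metis empty_iff image_iff)
  obtain s0 \<tau> where p0: "p0 = (s0, \<tau>)" by fastforce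
  have K: "s0 \<in> {sa..sb}" "\<tau> \<in> {0..T}" "\<epsilon> \<le> Q s0 \<tau>" using \<open>p0 \<in> K\<close> by (auto simp: K_def p0)
  have "\<tau> \<noteq> T" using top[of s0] K by auto
  then have "\<tau> < T" using K by simp
  have below: "Q s \<tau> \<le> \<epsilon>" if "s \<in> {sa..sb}" for s
  proof (rule ccontr)
    assume "\<not> Q s \<tau> \<le> \<epsilon>"
    then obtain t where "\<tau> < t" "t \<le> \<tau> + (T - \<tau>)" "\<epsilon> < Q s t"
      using isCont_exists_right_gt[OF isCont_Q, of \<epsilon> s \<tau> "T - \<tau>"] \<open>\<tau> < T\<close> by auto
    then have "(s, t) \<in> K" using that K by (auto simp: K_def)
    then show False using max \<open>\<tau> < t\<close> by (fastforce simp: p0)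
  qed
  have "0 < \<tau>"
  proof -
    obtain t where "0 < t" "t \<le> 0 + T" "\<epsilon> < Q r t"
      using isCont_exists_right_gt[OF isCont_Q start(2) \<open>0 < T\<close>] by blast
    then have "(r, t) \<in> K" using start by (auto simp: K_def)
    then show ?thesis using max \<open>0 < t\<close> by (fastforce simp: p0)
  qed
  then have "s0 \<in> {sa<..<sb}" using K ends[of \<tau>] \<open>\<tau> < T\<close> by (cases "s0 = sa \<or> s0 = sb") auto
  moreover have "Q s0 \<tau> = \<epsilon>" using below[of s0] K by simp
  ultimately show ?thesis using that \<open>0 < \<tau>\<close> \<open>\<tau> < T\<close> below by auto
qed

section \<open>Curves parametrized by \<open>circ_param\<close>\<close>

lemma circ_param_components [simp]:
  "circ_param \<alpha> \<theta> $ 1 = sqrt (1 - (\<alpha> \<theta>)\<^sup>2) * cos \<theta>"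
  "circ_param \<alpha> \<theta> $ 2 = sqrt (1 - (\<alpha> \<theta>)\<^sup>2) * sin \<theta>"
  "circ_param \<alpha> \<theta> $ 3 = \<alpha> \<theta>"
  by (simp_all add: circ_param_def)

lemma inner_self_circ_param:
  "circ_param \<alpha> \<theta> \<bullet> circ_param \<alpha> \<theta> = \<bar>1 - (\<alpha> \<theta>)\<^sup>2\<bar> + (\<alpha> \<theta>)\<^sup>2"
proof -
  have "r * cos \<theta> * (r * cos \<theta>) + r * sin \<theta> * (r * sin \<theta>) = r * r" for r :: real
    using sin_cos_squared_add3[of \<theta>] by algebra
  from this[of "sqrt (1 - (\<alpha> \<theta>)\<^sup>2)"] show ?thesis
    unfolding inner_vec_def sum_3 circ_param_components by (simp add: power2_eq_square)
qed

lemma circ_param_unit_imp_square_le_1: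
  assumes "norm (circ_param \<alpha> \<theta>) = 1"
  shows "(\<alpha> \<theta>)\<^sup>2 \<le> 1"
  using assms inner_self_circ_param[of \<alpha> \<theta>] by (simp add: norm_eq_1)

lemma circ_param_curve_off_poles:
  fixes \<gamma> :: "real \<Rightarrow> real^3"
  assumes par: "\<And>s. \<gamma> s = circ_param \<alpha> (\<phi> s)" and sphere: "\<And>s. norm (\<gamma> s) = 1"
    and "isCont \<phi> t" and d\<gamma>: "(\<gamma> has_vector_derivative g) (at t)" and "g \<noteq> 0"
  shows "(\<alpha> (\<phi> t))\<^sup>2 < 1"
proof (rule ccontr)
  assume "\<not> (\<alpha> (\<phi> t))\<^sup>2 < 1"
  moreover have "(\<alpha> (\<phi> s))\<^sup>2 \<le> 1" for s
    using sphere[of s] by (simp add: par circ_param_unit_imp_square_le_1)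
  ultimately have pole: "(\<alpha> (\<phi> t))\<^sup>2 = 1" by (meson less_eq_real_def)
  have "g $ 1 = 0 \<and> g $ 2 = 0"
    using \<open>isCont \<phi> t\<close> pole
      has_real_derivative_component[OF d\<gamma>, of 1] has_real_derivative_component[OF d\<gamma>, of 2]
    by (intro polar_curve_derivative_zero_at_origin[where R = "\<lambda>s. sqrt (1 - (\<alpha> (\<phi> s))\<^sup>2)"])
      (auto simp: par \<open>\<And>s. (\<alpha> (\<phi> s))\<^sup>2 \<le> 1\<close>)
  moreover have "\<gamma> t \<bullet> g = 0" by (rule unit_norm_derivative_orthogonal[OF sphere d\<gamma>])
  ultimately have "\<alpha> (\<phi> t) * g $ 3 = 0" by (simp add: inner_vec_def sum_3 par)
  then have "g $ 3 = 0" using pole by auto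
  then have "g = 0" using \<open>g $ 1 = 0 \<and> g $ 2 = 0\<close> by (simp add: vec_eq_iff forall_3)
  then show False using \<open>g \<noteq> 0\<close> by simp
qed

lemma circ_param_curve_winds_positively:
  fixes \<gamma> :: "real \<Rightarrow> real^3"
  assumes par: "\<And>s. \<gamma> s = circ_param \<alpha> (\<phi> s)" and sphere: "\<And>s. norm (\<gamma> s) = 1"
    and "isCont \<phi> t" "strict_mono \<phi>" and d\<gamma>: "(\<gamma> has_vector_derivative g) (at t)"
  shows "0 \<le> cross3 (\<gamma> t) g $ 3"
proof -
  have "(\<alpha> (\<phi> s))\<^sup>2 \<le> 1" for s
    using sphere[of s] by (simp add: par circ_param_unit_imp_square_le_1)
  then have "0 \<le> \<gamma> t $ 1 * g $ 2 - \<gamma> t $ 2 * g $ 1"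
    using assms(3,4)
      has_real_derivative_component[OF d\<gamma>, of 1] has_real_derivative_component[OF d\<gamma>, of 2]
    by (intro polar_curve_angular_momentum_nonneg[where R = "\<lambda>s. sqrt (1 - (\<alpha> (\<phi> s))\<^sup>2)"]) (auto simp: par)
  then show ?thesis by (simp add: cross3_simps)
qed

lemma circ_param_curve_touches_tilted_cap:
  fixes \<gamma> :: "real \<Rightarrow> real^3" and \<alpha> \<phi> :: "real \<Rightarrow> real"
  assumes "continuous_on UNIV \<gamma>" and par: "\<And>s. \<gamma> s = circ_param \<alpha> (\<phi> s)"
    and above: "\<And>s. \<epsilon> \<le> \<alpha> (\<phi> s)" and off_pole: "\<And>s. (\<alpha> (\<phi> s))\<^sup>2 < 1"
    and "0 < \<epsilon>" "strict_mono \<phi>" "\<phi> sa = a" "\<phi> sb = b" "a < b" "b - a < pi"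
    and "\<alpha> a = \<epsilon>" "\<alpha> b = \<epsilon>" and inside: "\<And>\<theta>. \<theta> \<in> {a<..<b} \<Longrightarrow> \<epsilon> < \<alpha> \<theta>"
  obtains c s0 where "s0 \<in> {sa<..<sb}" "norm c = 1" "\<And>s. s \<in> {sa..sb} \<Longrightarrow> \<gamma> s \<bullet> c \<le> \<epsilon>"
    "\<gamma> s0 \<bullet> c = \<epsilon>" "\<epsilon> * \<gamma> s0 $ 3 < c $ 3"
proof -
  define A where "A s = \<alpha> (\<phi> s)" for s
  define R where "R s = sqrt (1 - (A s)\<^sup>2)" for s
  have "0 < A s" "A s < 1" "0 < R s" for s
    using above[of s] off_pole[of s] \<open>0 < \<epsilon>\<close> by (auto simp: A_def R_def power_less_one_iff)
  \<comment> \<open>the axis of the cap is tilted by \<open>\<tau>\<close> from \<open>e\<^sub>3\<close> away from the meridian \<open>\<theta> = (a + b)/2\<close>\<close>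
  define m where "m = (a + b) / 2"
  define cap_axis :: "real \<Rightarrow> real^3"
    where "cap_axis \<tau> = (- sin \<tau> * cos m) *\<^sub>R axis 1 1 + (- sin \<tau> * sin m) *\<^sub>R axis 2 1
                        + cos \<tau> *\<^sub>R axis 3 1" for \<tau>
  define Q where "Q s \<tau> = \<gamma> s \<bullet> cap_axis \<tau>" for s \<tau>
  have Q: "Q s \<tau> = A s * cos \<tau> - sin \<tau> * (R s * cos (\<phi> s - m))" for s \<tau>
    by (simp add: Q_def cap_axis_def inner_add_right inner_axis par A_def R_def cos_diff algebra_simps)
  have "sa < sb" using \<open>a < b\<close> \<open>strict_mono \<phi>\<close> \<open>\<phi> sa = a\<close> \<open>\<phi> sb = b\<close> by (metis strict_mono_less not_less_iff_gr_or_eq)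
  have \<phi>_in: "\<phi> s \<in> {a<..<b}" if "s \<in> {sa<..<sb}" for s
    using that \<open>strict_mono \<phi>\<close> \<open>\<phi> sa = a\<close> \<open>\<phi> sb = b\<close> by (auto simp: strict_mono_less)
  have facing: "0 < cos (\<phi> s - m)" if "s \<in> {sa..sb}" for s
  proof -
    have "a \<le> \<phi> s" "\<phi> s \<le> b"
      using that \<open>strict_mono \<phi>\<close> \<open>\<phi> sa = a\<close> \<open>\<phi> sb = b\<close> by (auto simp: strict_mono_less_eq)
    then show ?thesis using \<open>b - a < pi\<close> unfolding m_def by (intro cos_gt_zero_pi) (simp_all add: field_simps)
  qed
  have tilt_pos: "0 < sin \<tau> * (R s * cos (\<phi> s - m))"
    if "s \<in> {sa..sb}" "\<tau> \<in> {0<..<pi}" for s \<tau>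
    using that facing[of s] \<open>0 < R s\<close> sin_gt_zero[of \<tau>] by simp
  obtain \<tau> s0 where \<tau>: "\<tau> \<in> {0<..<pi/2}" and "s0 \<in> {sa<..<sb}" "Q s0 \<tau> = \<epsilon>"
    and below: "\<And>s. s \<in> {sa..sb} \<Longrightarrow> Q s \<tau> \<le> \<epsilon>"
  proof (rule continuous_family_first_touch[where Q = Q and T = "pi/2" and r = "(sa + sb) / 2"])
    show "continuous_on UNIV (\<lambda>(s, \<tau>). Q s \<tau>)"
      unfolding Q_def cap_axis_def case_prod_unfold
      by (intro continuous_intros continuous_on_compose2[OF \<open>continuous_on UNIV \<gamma>\<close>]) auto
    show "(sa + sb) / 2 \<in> {sa<..<sb}" using \<open>sa < sb\<close> by simp
    then show "\<epsilon> < Q ((sa + sb) / 2) 0" using inside \<phi>_in by (simp add: Q A_def)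
    show "Q sa \<tau> < \<epsilon> \<and> Q sb \<tau> < \<epsilon>" if "\<tau> \<in> {0<..pi/2}" for \<tau>
    proof -
      have "\<epsilon> * cos \<tau> \<le> \<epsilon>" using \<open>0 < \<epsilon>\<close> by (simp add: mult_left_le)
      moreover have "A sa = \<epsilon>" "A sb = \<epsilon>"
        using \<open>\<alpha> a = \<epsilon>\<close> \<open>\<alpha> b = \<epsilon>\<close> \<open>\<phi> sa = a\<close> \<open>\<phi> sb = b\<close> by (simp_all add: A_def)
      moreover have "0 < sin \<tau> * (R sa * cos (\<phi> sa - m))" "0 < sin \<tau> * (R sb * cos (\<phi> sb - m))"
        using tilt_pos[of sa \<tau>] tilt_pos[of sb \<tau>] that \<open>sa < sb\<close> by auto
      ultimately show ?thesis by (simp add: Q)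
    qed
    show "Q s (pi/2) < \<epsilon>" if "s \<in> {sa..sb}" for s
      using mult_pos_pos[OF \<open>0 < R s\<close> facing[OF that]] \<open>0 < \<epsilon>\<close> by (simp add: Q)
  qed (auto simp: that)
  have axis_nth: "cap_axis \<tau> $ 1 = - sin \<tau> * cos m" "cap_axis \<tau> $ 2 = - sin \<tau> * sin m"
    "cap_axis \<tau> $ 3 = cos \<tau>"
    by (simp_all add: cap_axis_def axis_def)
  have "norm (cap_axis \<tau>) = 1"
    unfolding norm_eq_1 inner_vec_def sum_3 axis_nth inner_real_def
    using sin_cos_squared_add3[of \<tau>] sin_cos_squared_add3[of m] by algebra
  moreover have "\<epsilon> * \<gamma> s0 $ 3 < cap_axis \<tau> $ 3"
  proof -
    have "\<epsilon> < A s0 * cos \<tau>"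
      using \<open>Q s0 \<tau> = \<epsilon>\<close> tilt_pos[of s0 \<tau>] \<tau> \<open>s0 \<in> {sa<..<sb}\<close> by (simp add: Q)
    moreover have "A s0 * A s0 < 1"
      using \<open>0 < A s0\<close> \<open>A s0 < 1\<close> mult_strict_mono[of "A s0" 1 "A s0" 1] by simp
    then have "\<epsilon> * (A s0 * A s0) < \<epsilon>" using \<open>0 < \<epsilon>\<close> by simp
    ultimately have "A s0 * (\<epsilon> * A s0) < A s0 * cos \<tau>" by (simp add: algebra_simps)
    then show ?thesis using \<open>0 < A s0\<close> by (simp add: axis_nth par A_def)
  qed
  ultimately show ?thesis
    using that[of s0 "cap_axis \<tau>"] \<open>s0 \<in> {sa<..<sb}\<close> \<open>Q s0 \<tau> = \<epsilon>\<close> below by (simp add: Q_def)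
qed

lemma circ_param_curve_tangent_to_cap:
  fixes \<gamma> g :: "real \<Rightarrow> real^3" and \<alpha> \<phi> :: "real \<Rightarrow> real"
  assumes "0 < \<epsilon>" and par: "\<And>s. \<gamma> s = circ_param \<alpha> (\<phi> s)" and sphere: "\<And>s. norm (\<gamma> s) = 1"
    and above: "\<And>s. \<epsilon> \<le> \<alpha> (\<phi> s)"
    and d\<gamma>: "\<And>s. (\<gamma> has_vector_derivative g s) (at s)" and g_unit: "\<And>s. norm (g s) = 1"
    and "continuous_on UNIV \<phi>" "strict_mono \<phi>" "\<And>s. \<phi> (s + 2*pi) = \<phi> s + 2*pi"
    and "a < b" "b - a < pi" and inside: "\<forall>\<theta>\<in>{a<..<b}. \<epsilon> < \<alpha> \<theta>"
    and "\<not> \<epsilon> < \<alpha> a" "\<not> \<epsilon> < \<alpha> b"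
  obtains sa sb s0 c where "\<phi> sa = a" "\<phi> sb = b" "s0 \<in> {sa<..<sb}" "norm c = 1"
    "\<forall>s\<in>{sa..sb}. \<gamma> s \<bullet> c \<le> \<epsilon>" "\<gamma> s0 \<bullet> c = \<epsilon>" "g s0 \<bullet> c = 0"
    "0 < c \<bullet> cross3 (\<gamma> s0) (g s0)"
proof -
  have "isCont \<phi> t" for t using \<open>continuous_on UNIV \<phi>\<close> by (simp add: continuous_on_eq_continuous_at)
  have "continuous_on UNIV \<gamma>"
    using d\<gamma> by (meson continuous_at_imp_continuous_on has_vector_derivative_continuous)
  have off_pole: "(\<alpha> (\<phi> s))\<^sup>2 < 1" for s
    using circ_param_curve_off_poles[OF par sphere \<open>isCont \<phi> s\<close> d\<gamma>] g_unit[of s]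
    by (metis norm_zero zero_neq_one)
  obtain sa sb where "\<phi> sa = a" "\<phi> sb = b"
    using degree_one_lift_surj[OF \<open>continuous_on UNIV \<phi>\<close>] assms(9) by (metis surjD)
  moreover have "\<alpha> a = \<epsilon>" "\<alpha> b = \<epsilon>"
    using above[of sa] above[of sb] calculation \<open>\<not> \<epsilon> < \<alpha> a\<close> \<open>\<not> \<epsilon> < \<alpha> b\<close> by auto
  ultimately obtain c s0 where s0: "s0 \<in> {sa<..<sb}" and "norm c = 1"
    and below: "\<And>s. s \<in> {sa..sb} \<Longrightarrow> \<gamma> s \<bullet> c \<le> \<epsilon>" and "\<gamma> s0 \<bullet> c = \<epsilon>" and "\<epsilon> * \<gamma> s0 $ 3 < c $ 3"
    using circ_param_curve_touches_tilted_cap[OF \<open>continuous_on UNIV \<gamma>\<close> par above off_pole \<open>0 < \<epsilon>\<close>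
        \<open>strict_mono \<phi>\<close> _ _ \<open>a < b\<close> \<open>b - a < pi\<close> _ _ inside[rule_format]]
    by blast
  have "g s0 \<bullet> c = 0"
    using s0 below \<open>\<gamma> s0 \<bullet> c = \<epsilon>\<close>
    by (intro real_derivative_zero_at_interior_max[OF has_real_derivative_inner_const[OF d\<gamma>], of s0 sa sb]) auto
  moreover have "0 < c \<bullet> cross3 (\<gamma> s0) (g s0)"
    using \<open>\<gamma> s0 \<bullet> c = \<epsilon>\<close> \<open>g s0 \<bullet> c = 0\<close> \<open>\<epsilon> * \<gamma> s0 $ 3 < c $ 3\<close>
      circ_param_curve_winds_positively[OF par sphere \<open>isCont \<phi> s0\<close> \<open>strict_mono \<phi>\<close> d\<gamma>]
      unit_norm_derivative_orthogonal[OF sphere d\<gamma>]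
    by (intro cap_contact_normal_component_pos[OF sphere g_unit]) (simp_all add: inner_commute)
  ultimately show ?thesis
    using that \<open>\<phi> sa = a\<close> \<open>\<phi> sb = b\<close> s0 \<open>norm c = 1\<close> below \<open>\<gamma> s0 \<bullet> c = \<epsilon>\<close> by blast
qed

lemma circ_param_curve_curvature_bound:
  fixes \<gamma> :: "real \<Rightarrow> real^3" and \<alpha> \<phi> :: "real \<Rightarrow> real"
  assumes "0 < \<epsilon>" "\<epsilon> < 1" and Y: "\<gamma> \<in> Ytilde \<epsilon>" and unit: "\<And>t. norm (vd \<gamma> t) = 1"
    and lift: "continuous_on UNIV \<phi>" "strict_mono \<phi>" "\<And>s. \<phi> (s + 2*pi) = \<phi> s + 2*pi"
    and par: "\<And>s. \<gamma> s = circ_param \<alpha> (\<phi> s)"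
    and excursion: "a < b" "b - a < pi" "\<forall>\<theta>\<in>{a<..<b}. \<epsilon> < \<alpha> \<theta>"
      "\<not> \<epsilon> < \<alpha> a" "\<not> \<epsilon> < \<alpha> b"
  shows "\<exists>s. \<phi> s \<in> {a<..<b} \<and> vd \<gamma> differentiable (at s) \<and> kappa \<gamma> s \<le> \<epsilon> / sqrt (1 - \<epsilon>\<^sup>2)"
proof -
  have "W22_loop \<gamma>" and sphere: "\<And>s. norm (\<gamma> s) = 1" and "\<And>s. \<epsilon> \<le> \<gamma> s $ 3"
    using Y by (simp_all add: Ytilde_def)
  then have above: "\<epsilon> \<le> \<alpha> (\<phi> s)" for s by (simp add: par)
  obtain N g h where "negligible N" "continuous_on UNIV g"
    and d\<gamma>: "\<And>t. (\<gamma> has_vector_derivative g t) (at t)" and g_unit: "\<And>t. norm (g t) = 1"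
    and Hh: "\<And>x y. x \<le> y \<Longrightarrow> (h has_integral (g y - g x)) {x..y}"
    and dg: "\<And>t. t \<notin> N \<Longrightarrow> (g has_vector_derivative h t) (at t)"
    and \<kappa>: "\<And>t. t \<notin> N \<Longrightarrow> vd \<gamma> differentiable (at t) \<and> kappa \<gamma> t = h t \<bullet> cross3 (\<gamma> t) (g t)"
    by (rule W22_unit_speed_frame[OF \<open>W22_loop \<gamma>\<close> unit]) (rule that; assumption)
  obtain sa sb s0 c where "\<phi> sa = a" "\<phi> sb = b" "s0 \<in> {sa<..<sb}" "norm c = 1"
    and below: "\<forall>s\<in>{sa..sb}. \<gamma> s \<bullet> c \<le> \<epsilon>"
    and contact: "\<gamma> s0 \<bullet> c = \<epsilon>" "g s0 \<bullet> c = 0" "0 < c \<bullet> cross3 (\<gamma> s0) (g s0)"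
    by (rule circ_param_curve_tangent_to_cap[OF \<open>0 < \<epsilon>\<close> par sphere above d\<gamma> g_unit lift excursion])
      (rule that; assumption)
  have "s0 < sb" and below': "\<And>s. s \<in> {s0..sb} \<Longrightarrow> \<gamma> s \<bullet> c \<le> \<epsilon>"
    using \<open>s0 \<in> {sa<..<sb}\<close> below by auto
  have "\<exists>s \<in> {s0<..<sb} - N. h s \<bullet> cross3 (\<gamma> s) (g s) \<le> \<epsilon> / sqrt (1 - \<epsilon>\<^sup>2)"
    by (intro curvature_bound_at_cap_contact[OF \<open>0 < \<epsilon>\<close> \<open>\<epsilon> < 1\<close> \<open>negligible N\<close> \<open>s0 < sb\<close>
        unit_speed_sphere_curve_height[OF sphere d\<gamma> g_unit \<open>continuous_on UNIV g\<close> Hh dg \<open>norm c = 1\<close>]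
        below' contact])
  then obtain s where s: "s \<in> {s0<..<sb} - N" "h s \<bullet> cross3 (\<gamma> s) (g s) \<le> \<epsilon> / sqrt (1 - \<epsilon>\<^sup>2)"
    by blast
  moreover have "\<phi> s \<in> {a<..<b}"
    using s(1) \<open>s0 \<in> {sa<..<sb}\<close> \<open>strict_mono \<phi>\<close> \<open>\<phi> sa = a\<close> \<open>\<phi> sb = b\<close> by (auto simp: strict_mono_less)
  ultimately show ?thesis using \<kappa>[of s] by force
qed

theorem lemma3p3:
  shows "\<exists>\<epsilon>0>0. \<forall>\<epsilon> (\<gamma>::real \<Rightarrow> real^3) (\<alpha>::real \<Rightarrow> real) (\<phi>::real \<Rightarrow> real) a b.
     0 < \<epsilon> \<and> \<epsilon> < \<epsilon>0 \<and>
     \<gamma> \<in> Ytilde \<epsilon> \<and> (\<forall>\<eta>\<in>Ytilde \<epsilon>. F \<gamma> \<le> F \<eta>) \<and>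
     (\<forall>t. norm (vd \<gamma> t) = 1) \<and>
     (\<forall>\<theta>. \<alpha> (\<theta> + 2*pi) = \<alpha> \<theta>) \<and>
     continuous_on UNIV \<phi> \<and> strict_mono \<phi> \<and> (\<forall>s. \<phi> (s + 2*pi) = \<phi> s + 2*pi) \<and>
     (\<forall>s. \<gamma> s = circ_param \<alpha> (\<phi> s)) \<and>
     a < b \<and> b - a < pi \<and> (\<forall>\<theta>\<in>{a<..<b}. \<alpha> \<theta> > \<epsilon>) \<and> \<not> (\<alpha> a > \<epsilon>) \<and> \<not> (\<alpha> b > \<epsilon>)
     \<longrightarrow> (\<exists>s. \<phi> s \<in> {a<..<b} \<and> vd \<gamma> differentiable (at s) \<and>
              kappa \<gamma> s \<le> \<epsilon> / sqrt (1 - \<epsilon>^2))"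
proof (rule exI[of _ "1/2"], intro conjI allI impI, goal_cases)
  case 1
  show ?case by simp
next
  case (2 \<epsilon> \<gamma> \<alpha> \<phi> a b)
  then show ?case by (intro circ_param_curve_curvature_bound[where \<alpha> = \<alpha>]) auto
qed

end
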